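(* Let $\beta$ be a primitive $2p$-th root of unity in $\mathbb{F}_q$, let $\eta_0=\sum_{i\in D_0^{(p)}}\beta^{2i}$, $\eta_1=\sum_{i\in D_1^{(p)}}\beta^{2i}$, and let $S(x)$ be the generating polynomial of the sequence $s$, viewed in $\mathbb{F}_q[x]$. Then, with integers interpreted in $\mathbb{F}_q$ via the canonical map $\mathbb{Z}\to\mathbb{F}_q$: (1) if $p\equiv\pm1\pmod 8$, $$S(\beta^k)=\begin{cases} p, & k=0,\\ 1, & k\in D_0^{(2p)}\cup D_1^{(2p)}\cup\{p\},\\ 1+2\eta_1, & k\in 2D_0^{(p)},\\ 1+2\eta_0, & k\in 2D_1^{(p)};\end{cases}$$ (2) if $p\equiv\pm3\pmod 8$, $$S(\beta^k)=\begin{cases} p, & k=0,\\ 1, & k=p,\\ -2\eta_0, & k\in D_0^{(2p)},\\ -2\eta_1, & k\in D_1^{(2p)},\\ 0, & k\in 2D_0^{(p)}\cup 2D_1^{(p)}.\end{cases}$$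
   Context: Let $p$ be an odd prime and $g$ an odd integer which is a primitive root modulo $p$ and modulo $2p$. Define $D_0^{(p)}=\{g^{2k}\bmod p : 0\le k\le \frac{p-1}{2}-1\}$, $D_1^{(p)}=\{g^{2k+1}\bmod p : 0\le k\le \frac{p-1}{2}-1\}$, $D_0^{(2p)}=\{g^{2k}\bmod 2p : 0\le k\le \frac{p-1}{2}-1\}$, $D_1^{(2p)}=\{g^{2k+1}\bmod 2p : 0\le k\le \frac{p-1}{2}-1\}$, viewed as subsets of $\{0,\dots,p-1\}$ resp. $\mathbb{Z}_{2p}=\{0,1,\dots,2p-1\}$. For $j\in\{0,1\}$ let $2D_j^{(p)}=\{2a \bmod 2p : a\in D_j^{(p)}\}\subseteq \mathbb{Z}_{2p}$. Then $\mathbb{Z}_{2p}$ is the disjoint union of $D_0^{(2p)},D_1^{(2p)},2D_0^{(p)},2D_1^{(p)},\{p\},\{0\}$. Let $C_1=D_1^{(2p)}\cup 2D_1^{(p)}\cup\{0\}$ and $C_0=D_0^{(2p)}\cup 2D_0^{(p)}\cup\{p\}$. The binary sequence $s=(s_i)_{i\ge 0}$ of period $2p$ is defined by $s_i=1$ if $i\bmod 2p\in C_1$ and $s_i=0$ if $i\bmod 2p\in C_0$. Its generating polynomial is $S(x)=\sum_{i=0}^{2p-1}s_ix^i=1+\sum_{i\in D_1^{(2p)}}x^i+\sum_{i\in 2D_1^{(p)}}x^i$. Let $r\ge 5$ be a prime with $r\ne p$, $m$ the multiplicative order of $r$ modulo $p$, and $q=r^m$ (so $2p\mid q-1$). *)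

theory Defs
  imports "HOL-Number_Theory.Number_Theory" "HOL-Computational_Algebra.Polynomial" "HOL-Library.Cardinality"
begin

definition D0p :: "nat \<Rightarrow> nat \<Rightarrow> nat set" where
  "D0p g p = {g ^ (2*k) mod p | k. k < (p - 1) div 2}"

definition D1p :: "nat \<Rightarrow> nat \<Rightarrow> nat set" where
  "D1p g p = {g ^ (2*k+1) mod p | k. k < (p - 1) div 2}"

definition D02p :: "nat \<Rightarrow> nat \<Rightarrow> nat set" where
  "D02p g p = {g ^ (2*k) mod (2*p) | k. k < (p - 1) div 2}"

definition D12p :: "nat \<Rightarrow> nat \<Rightarrow> nat set" where
  "D12p g p = {g ^ (2*k+1) mod (2*p) | k. k < (p - 1) div 2}"

definition twoD :: "nat \<Rightarrow> nat set \<Rightarrow> nat set" where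
  "twoD p A = {(2*a) mod (2*p) | a. a \<in> A}"

definition C1 :: "nat \<Rightarrow> nat \<Rightarrow> nat set" where
  "C1 g p = D12p g p \<union> twoD p (D1p g p) \<union> {0}"

definition seq_s :: "nat \<Rightarrow> nat \<Rightarrow> nat \<Rightarrow> nat" where
  "seq_s g p i = (if i mod (2*p) \<in> C1 g p then 1 else 0)"

definition gen_poly :: "nat \<Rightarrow> nat \<Rightarrow> 'a::comm_ring_1 poly" where
  "gen_poly g p = (\<Sum>i<2*p. monom (of_nat (seq_s g p i)) i)"

end

theory Submission
  imports Defs
begin

text \<open>Put \<open>\<zeta> = -\<beta>\<close>, a primitive \<open>p\<close>-th root of unity. Every element of \<open>D_1^(2p)\<close> is
  odd and reduction mod \<open>p\<close> maps \<open>D_1^(2p)\<close> bijectively onto \<open>D_1^(p)\<close>, so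
  \<open>S(\<beta>^k) = 1 + (-1)^k T(k) + T(2k)\<close> where \<open>T(c)\<close> is the sum of \<open>\<zeta>^(cx)\<close> over \<open>x \<in> D_1^(p)\<close>.
  Multiplication by \<open>c \<equiv> g^i (mod p)\<close> maps each cyclotomic class onto the class whose index
  is shifted by \<open>i\<close>, so \<open>T(c)\<close> is one of the two Gauss periods, and these sum to \<open>-1\<close>.
  Passing from \<open>k\<close> to \<open>2k\<close> shifts the index by that of \<open>2\<close>, and Gauss's lemma shows
  that the index of \<open>2\<close> is even exactly when \<open>p \<equiv> \<plusminus>1 (mod 8)\<close>.\<close>

lemma power_eq_power_mod: "(x::'a::monoid_mult) ^ n = 1 \<Longrightarrow> x ^ m = x ^ (m mod n)"
  by (metis div_mult_mod_eq power_add power_mult power_one mult_1 mult.commute)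

lemma (in GAUSS) card_E_two:
  assumes "a = 2"
  shows "card E = nat ((int p - 1) div 2 - (int p - 1) div 2 div 2)"
proof -
  define H where "H = (int p - 1) div 2"
  have "C = (\<lambda>x. x * 2) ` A"
    unfolding C_def B_def image_image
  proof (rule image_cong[OF refl])
    fix x assume "x \<in> A"
    then show "x * a mod int p = x * 2"
      using assms p_eq2 by (auto simp: A_def)
  qed
  then have "E = (\<lambda>x. x * 2) ` {H div 2 <.. H}"
    unfolding E_def H_def[symmetric] A_def by (auto simp: H_def; presburger)
  then show ?thesis
    by (simp add: card_image inj_on_def H_def)
qed

locale cyclotomic_classes =
  fixes p g :: nat
  assumes prime_p: "prime p" and odd_p: "odd p" and primroot_g: "residue_primroot p g"
begin

definition half :: nat where "half = (p - 1) div 2"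

definition cyclotomic_class :: "nat \<Rightarrow> nat set" where
  "cyclotomic_class e = {g ^ j mod p | j. even j \<longleftrightarrow> even e}"

definition discrete_log :: "nat \<Rightarrow> nat" where
  "discrete_log c = (SOME j. c mod p = g ^ j mod p)"

lemma p_gt_2: "p > 2"
  using prime_ge_2_nat[OF prime_p] odd_p by (cases "p = 2") auto

lemma p_eq_half: "p = 2 * half + 1"
  using odd_p p_gt_2 unfolding half_def by presburger

lemma half_pos: "half > 0"
  using p_eq_half p_gt_2 by linarith

lemma coprime_p_g: "coprime p g"
  using primroot_g by (simp add: residue_primroot_def)

lemma ord_g: "ord p g = 2 * half"
  using primroot_g prime_p p_eq_half by (simp add: residue_primroot_def totient_prime)

lemma power_mod_eq_iff: "g ^ a mod p = g ^ b mod p \<longleftrightarrow> a mod (2 * half) = b mod (2 * half)"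
  using order_divides_expdiff[OF coprime_p_g, of a b] ord_g by (simp add: cong_def)

lemma power_mod_reduce: "g ^ j mod p = g ^ (j mod (2 * half)) mod p"
  using power_mod_eq_iff by simp

lemma D0p_eq_image: "D0p g p = (\<lambda>k. g ^ (2 * k) mod p) ` {..<half}"
  by (auto simp: D0p_def half_def)

lemma D1p_eq_image: "D1p g p = (\<lambda>k. g ^ (2 * k + 1) mod p) ` {..<half}"
  by (auto simp: D1p_def half_def)

lemma power_mod_mem_D0p_D1p: "g ^ j mod p \<in> (if even j then D0p g p else D1p g p)"
proof -
  define r where "r = j mod (2 * half)"
  have "r < 2 * half" using half_pos unfolding r_def by simp
  moreover have "even r \<longleftrightarrow> even j" unfolding r_def by (simp add: dvd_mod_iff)
  moreover have "g ^ j mod p = g ^ r mod p" unfolding r_def by (rule power_mod_reduce)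
  ultimately show ?thesis
    unfolding D0p_eq_image D1p_eq_image
    by (cases "even r") (auto elim!: evenE oddE intro!: image_eqI)
qed

lemma power_mod_mem_D0p: "even j \<Longrightarrow> g ^ j mod p \<in> D0p g p"
  using power_mod_mem_D0p_D1p[of j] by simp

lemma power_mod_mem_D1p: "odd j \<Longrightarrow> g ^ j mod p \<in> D1p g p"
  using power_mod_mem_D0p_D1p[of j] by simp

lemma D0p_eq_class: "D0p g p = cyclotomic_class 0"
proof
  show "D0p g p \<subseteq> cyclotomic_class 0"
    unfolding D0p_eq_image cyclotomic_class_def by auto
  show "cyclotomic_class 0 \<subseteq> D0p g p"
    unfolding cyclotomic_class_def by (auto intro: power_mod_mem_D0p)
qed

lemma D1p_eq_class: "D1p g p = cyclotomic_class 1"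
proof
  show "D1p g p \<subseteq> cyclotomic_class 1"
    unfolding D1p_eq_image cyclotomic_class_def by (auto simp del: power_Suc)
  show "cyclotomic_class 1 \<subseteq> D1p g p"
    unfolding cyclotomic_class_def by (auto intro: power_mod_mem_D1p)
qed

lemma cyclotomic_class_parity: "cyclotomic_class e = (if even e then D0p g p else D1p g p)"
  by (simp add: D0p_eq_class D1p_eq_class cyclotomic_class_def)

lemma inj_on_power_mod: "r < 2 \<Longrightarrow> inj_on (\<lambda>k. g ^ (2 * k + r) mod p) {..<half}"
  by (rule inj_onI) (simp add: power_mod_eq_iff)

lemma card_cyclotomic_class: "card (cyclotomic_class e) = half"
  using card_image[OF inj_on_power_mod[of 0]] card_image[OF inj_on_power_mod[of 1]]
  by (simp add: cyclotomic_class_parity D0p_eq_image D1p_eq_image)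

lemma cyclotomic_class_subset: "cyclotomic_class e \<subseteq> {1..<p}"
proof -
  have "\<not> p dvd g ^ j" for j
    using coprime_p_g prime_p by (metis coprime_absorb_left prime_dvd_power not_prime_unit)
  then show ?thesis
    using p_gt_2 by (auto simp: cyclotomic_class_def mod_greater_zero_iff_not_dvd Suc_le_eq)
qed

lemma finite_cyclotomic_class [simp]: "finite (cyclotomic_class e)"
  using cyclotomic_class_subset by (rule finite_subset) simp

lemma mod_eq_power_discrete_log: "\<not> p dvd c \<Longrightarrow> c mod p = g ^ discrete_log c mod p"
proof -
  assume "\<not> p dvd c"
  then have "coprime (c mod p) p"
    using prime_imp_coprime[OF prime_p] p_gt_2 by (simp add: coprime_commute[of p] coprime_mod_left_iff)
  then have "c mod p \<in> totatives p"
    using \<open>\<not> p dvd c\<close> p_gt_2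
    by (auto simp: totatives_def mod_greater_zero_iff_not_dvd intro: less_imp_le)
  moreover have "bij_betw (\<lambda>i. g ^ i mod p) {..<totient p} (totatives p)"
    using residue_primroot_is_generator[OF _ primroot_g] p_gt_2 by simp
  ultimately have "\<exists>j. c mod p = g ^ j mod p"
    unfolding bij_betw_def by blast
  then show ?thesis
    unfolding discrete_log_def by (rule someI_ex)
qed

lemma discrete_log_two: "2 mod p = g ^ discrete_log 2 mod p"
  using p_gt_2 by (intro mod_eq_power_discrete_log) (auto dest: dvd_imp_le)

lemma cyclotomic_classes_partition:
  "cyclotomic_class 0 \<union> cyclotomic_class 1 = {1..<p}"
  "cyclotomic_class 0 \<inter> cyclotomic_class 1 = {}"
proof -
  have "x \<in> cyclotomic_class 0 \<union> cyclotomic_class 1" if "x \<in> {1..<p}" for x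
  proof -
    have "\<not> p dvd x" using that by (auto dest: dvd_imp_le)
    then have "x = g ^ discrete_log x mod p"
      using mod_eq_power_discrete_log[of x] that by simp
    then show ?thesis
      unfolding cyclotomic_class_def by (cases "even (discrete_log x)") auto
  qed
  then show "cyclotomic_class 0 \<union> cyclotomic_class 1 = {1..<p}"
    using cyclotomic_class_subset by blast
  show "cyclotomic_class 0 \<inter> cyclotomic_class 1 = {}"
    by (auto simp: cyclotomic_class_def power_mod_eq_iff) (metis dvd_mod_iff even_mult_iff even_numeral)
qed

lemma mult_power_mod: "c mod p = g ^ i mod p \<Longrightarrow> c * (g ^ j mod p) mod p = g ^ (i + j) mod p"
  by (metis mod_mult_eq mod_mod_trivial power_add)

lemma inj_on_mult_mod_cyclotomic_class:
  assumes c: "c mod p = g ^ i mod p"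
  shows "inj_on (\<lambda>x. c * x mod p) (cyclotomic_class e)"
proof (rule inj_onI)
  fix x y assume "x \<in> cyclotomic_class e" "y \<in> cyclotomic_class e"
    and "c * x mod p = c * y mod p"
  then obtain j k where "x = g ^ j mod p" "y = g ^ k mod p" "[i + j = i + k] (mod 2 * half)"
    by (auto simp: cyclotomic_class_def mult_power_mod[OF c] power_mod_eq_iff cong_def)
  then show "x = y"
    by (metis cong_add_lcancel_nat cong_def power_mod_eq_iff)
qed

lemma image_mult_cyclotomic_class:
  assumes c: "c mod p = g ^ i mod p"
  shows "(\<lambda>x. c * x mod p) ` cyclotomic_class e = cyclotomic_class (i + e)"
proof (rule card_subset_eq)
  show "(\<lambda>x. c * x mod p) ` cyclotomic_class e \<subseteq> cyclotomic_class (i + e)"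
    using mult_power_mod[OF c] by (fastforce simp: cyclotomic_class_def)
  show "card ((\<lambda>x. c * x mod p) ` cyclotomic_class e) = card (cyclotomic_class (i + e))"
    using inj_on_mult_mod_cyclotomic_class[OF c] by (simp add: card_image card_cyclotomic_class)
qed simp

lemma sum_cyclotomic_class_power_mult:
  fixes \<zeta> :: "'a::comm_ring_1"
  assumes "\<zeta> ^ p = 1" and c: "c mod p = g ^ i mod p"
  shows "(\<Sum>x\<in>cyclotomic_class e. \<zeta> ^ (c * x)) = (\<Sum>x\<in>cyclotomic_class (i + e). \<zeta> ^ x)"
proof -
  have "(\<Sum>x\<in>cyclotomic_class e. \<zeta> ^ (c * x)) = (\<Sum>x\<in>cyclotomic_class e. \<zeta> ^ (c * x mod p))"
    using power_eq_power_mod[OF assms(1)] by simp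
  also have "\<dots> = (\<Sum>x\<in>(\<lambda>x. c * x mod p) ` cyclotomic_class e. \<zeta> ^ x)"
    using inj_on_mult_mod_cyclotomic_class[OF c] by (simp add: sum.reindex)
  finally show ?thesis
    by (simp add: image_mult_cyclotomic_class[OF c])
qed

lemma two_power_half_cong: "[2 ^ half = (-1) ^ (half - half div 2)] (mod int p)"
proof -
  have "\<not> int p dvd 2"
    using p_gt_2 by (auto dest: zdvd_imp_le)
  then interpret GAUSS p 2
    using prime_p p_gt_2 by unfold_locales (auto simp: cong_0_iff)
  have "(int p - 1) div 2 = int half"
    using p_eq_half by simp
  moreover have "nat (int half - int half div 2) = half - half div 2"
    by (simp add: zdiv_int[symmetric])
  ultimately show ?thesis
    using pre_gauss_lemma card_E_two by simp
qed

lemma minus_one_power_cong_one_iff: "[(-1) ^ n = 1] (mod int p) \<longleftrightarrow> even n"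
proof -
  have "\<not> [-1 = 1] (mod int p)"
    using p_gt_2 by (auto simp: cong_iff_dvd_diff dest: zdvd_imp_le)
  then show ?thesis
    by (cases "even n") auto
qed

lemma even_half_minus_quarter_iff: "even (half - half div 2) \<longleftrightarrow> p mod 8 = 1 \<or> p mod 8 = 7"
  using p_eq_half by presburger

theorem even_discrete_log_two_iff: "even (discrete_log 2) \<longleftrightarrow> p mod 8 = 1 \<or> p mod 8 = 7"
proof -
  define i where "i = discrete_log 2"
  have "2 mod p = g ^ i mod p"
    unfolding i_def by (rule discrete_log_two)
  then have "even i \<longleftrightarrow> [g ^ (i * half) = 1] (mod p)"
    using ord_divides[of g "i * half" p] ord_g half_pos by simp
  also have "\<dots> \<longleftrightarrow> [2 ^ half = 1] (mod p)"
    using \<open>2 mod p = g ^ i mod p\<close> by (metis cong_def power_mod power_mult)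
  also have "\<dots> \<longleftrightarrow> [2 ^ half = 1] (mod int p)"
    by (metis cong_int_iff of_nat_1 of_nat_numeral of_nat_power)
  also have "\<dots> \<longleftrightarrow> [(-1) ^ (half - half div 2) = 1] (mod int p)"
    using two_power_half_cong by (meson cong_sym cong_trans)
  finally show ?thesis
    unfolding i_def minus_one_power_cong_one_iff even_half_minus_quarter_iff .
qed

end

locale binary_cyclotomic_sequence = cyclotomic_classes +
  assumes odd_g: "odd g"
begin

lemma D12p_eq_image: "D12p g p = (\<lambda>k. g ^ (2 * k + 1) mod (2 * p)) ` {..<half}"
  by (auto simp: D12p_def half_def)

lemma odd_power_mod_double: "odd (g ^ n mod (2 * p))"
  using odd_g by (simp add: dvd_mod_iff)

lemma mod_double_mod: "x mod (2 * p) mod p = x mod p"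
  by (simp add: mod_mod_cancel)

lemma bij_betw_mod_D12p: "bij_betw (\<lambda>x. x mod p) (D12p g p) (cyclotomic_class 1)"
proof -
  have "inj_on ((\<lambda>x. x mod p) \<circ> (\<lambda>k. g ^ (2 * k + 1) mod (2 * p))) {..<half}"
    using inj_on_power_mod[of 1] by (simp add: comp_def mod_double_mod)
  moreover have "inj_on (\<lambda>k. g ^ (2 * k + 1) mod (2 * p)) {..<half}"
    using inj_on_imageI2 calculation by blast
  ultimately show ?thesis
    unfolding bij_betw_def D12p_eq_image D1p_eq_class[symmetric] D1p_eq_image
    by (simp add: comp_inj_on_iff image_image mod_double_mod)
qed

lemma twoD_eq_image: "A \<subseteq> {..<p} \<Longrightarrow> twoD p A = (\<lambda>a. 2 * a) ` A"
  by (force simp: twoD_def)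

lemma C1_eq: "C1 g p = insert 0 (D12p g p \<union> (\<lambda>a. 2 * a) ` cyclotomic_class 1)"
proof -
  have "twoD p (cyclotomic_class 1) = (\<lambda>a. 2 * a) ` cyclotomic_class 1"
    using cyclotomic_class_subset[of 1] by (intro twoD_eq_image) auto
  then show ?thesis
    by (auto simp: C1_def D1p_eq_class)
qed

lemma poly_gen_poly:
  fixes x :: "'a::comm_ring_1"
  shows "poly (gen_poly g p) x
    = 1 + (\<Sum>i\<in>D12p g p. x ^ i) + (\<Sum>a\<in>cyclotomic_class 1. x ^ (2 * a))"
proof -
  have odd_D12p: "odd i" if "i \<in> D12p g p" for i
    using that odd_power_mod_double unfolding D12p_def by blast
  have C1_bound: "C1 g p \<subseteq> {..<2 * p}"
    using p_gt_2 by (auto simp: C1_def D12p_def twoD_def)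
  have zero_notin: "0 \<notin> D12p g p \<union> (\<lambda>a. 2 * a) ` cyclotomic_class 1"
    using odd_D12p cyclotomic_class_subset[of 1] by force
  have disjoint: "D12p g p \<inter> (\<lambda>a. 2 * a) ` cyclotomic_class 1 = {}"
    using odd_D12p by force
  have "poly (gen_poly g p) x = (\<Sum>i<2 * p. if i \<in> C1 g p then x ^ i else 0)"
    unfolding gen_poly_def seq_s_def by (auto simp: poly_sum poly_monom intro!: sum.cong)
  also have "\<dots> = (\<Sum>i\<in>C1 g p. x ^ i)"
    using C1_bound by (simp add: sum.inter_restrict[symmetric] Int_absorb1)
  also have "\<dots> = 1 + ((\<Sum>i\<in>D12p g p. x ^ i) + (\<Sum>i\<in>(\<lambda>a. 2 * a) ` cyclotomic_class 1. x ^ i))"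
    unfolding C1_eq using zero_notin disjoint by (simp add: sum.union_disjoint D12p_eq_image)
  also have "(\<Sum>i\<in>(\<lambda>a. 2 * a) ` cyclotomic_class 1. x ^ i) = (\<Sum>a\<in>cyclotomic_class 1. x ^ (2 * a))"
    by (simp add: sum.reindex inj_on_def)
  finally show ?thesis
    by (simp add: add.assoc)
qed

end

locale sequence_at_root_of_unity = binary_cyclotomic_sequence p g for p g :: nat +
  fixes \<beta> :: "'a::field"
  assumes beta_power_double_p: "\<beta> ^ (2 * p) = 1"
    and beta_power_ne_one: "\<And>j. 0 < j \<Longrightarrow> j < 2 * p \<Longrightarrow> \<beta> ^ j \<noteq> 1"
begin

definition \<zeta> :: 'a where "\<zeta> = - \<beta>"

definition residue_period :: 'a where
  "residue_period = (\<Sum>x\<in>D0p g p. \<zeta> ^ x)"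

definition nonresidue_period :: 'a where
  "nonresidue_period = (\<Sum>x\<in>D1p g p. \<zeta> ^ x)"

lemma beta_power_p: "\<beta> ^ p = -1"
proof -
  have "(\<beta> ^ p)\<^sup>2 = 1"
    using beta_power_double_p by (simp add: power_mult[symmetric] mult.commute)
  moreover have "\<beta> ^ p \<noteq> 1"
    using beta_power_ne_one[of p] p_gt_2 by simp
  ultimately show ?thesis
    by (simp add: power2_eq_1_iff)
qed

lemma zeta_power_p: "\<zeta> ^ p = 1"
  using beta_power_p odd_p by (simp add: \<zeta>_def)

lemma beta_power: "\<beta> ^ n = (-1) ^ n * \<zeta> ^ n"
  using power_mult_distrib[of "-1" \<zeta> n] by (simp add: \<zeta>_def)

lemma zeta_ne_one: "\<zeta> \<noteq> 1"
proof
  assume "\<zeta> = 1"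
  then have "\<beta> ^ 2 = 1"
    using beta_power[of 2] by simp
  then show False
    using beta_power_ne_one[of 2] p_gt_2 by simp
qed

lemma sum_cyclotomic_class_zeta_power:
  assumes "k mod p = g ^ j mod p"
  shows "(\<Sum>x\<in>cyclotomic_class e. \<zeta> ^ (k * x))
    = (if even (j + e) then residue_period else nonresidue_period)"
  using sum_cyclotomic_class_power_mult[OF zeta_power_p assms]
  by (simp add: cyclotomic_class_parity residue_period_def nonresidue_period_def)

lemma residue_period_plus_nonresidue_period: "residue_period + nonresidue_period = -1"
proof -
  have "(\<Sum>x<p. \<zeta> ^ x) = 0"
    using zeta_ne_one zeta_power_p by (simp add: sum_gp_strict)
  moreover have "{..<p} = insert 0 {1..<p}"
    using p_gt_2 by auto
  ultimately have "(\<Sum>x\<in>{1..<p}. \<zeta> ^ x) = -1"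
    by (simp add: eq_neg_iff_add_eq_0 add.commute)
  then show ?thesis
    unfolding residue_period_def nonresidue_period_def D0p_eq_class D1p_eq_class
      cyclotomic_classes_partition(1)[symmetric]
    using cyclotomic_classes_partition(2) by (simp add: sum.union_disjoint)
qed

lemma poly_gen_poly_beta_power:
  "poly (gen_poly g p) (\<beta> ^ k)
    = 1 + (-1) ^ k * (\<Sum>x\<in>cyclotomic_class 1. \<zeta> ^ (k * x))
        + (\<Sum>x\<in>cyclotomic_class 1. \<zeta> ^ (2 * k * x))"
proof -
  have D12p_term: "(\<beta> ^ k) ^ i = (-1) ^ k * \<zeta> ^ (k * (i mod p))" if "i \<in> D12p g p" for i
  proof -
    have "odd i"
      using that odd_power_mod_double unfolding D12p_def by blast
    then have "(-1 :: 'a) ^ (k * i) = (-1) ^ k"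
      by (simp add: mult.commute[of k] power_mult)
    then have "(\<beta> ^ k) ^ i = (-1) ^ k * \<zeta> ^ (k * i)"
      by (simp add: power_mult[symmetric] beta_power[of "k * i"])
    also have "\<zeta> ^ (k * i) = \<zeta> ^ (k * (i mod p))"
      using power_eq_power_mod[OF zeta_power_p] by (metis mod_mult_right_eq)
    finally show ?thesis .
  qed
  have "(\<Sum>i\<in>D12p g p. (\<beta> ^ k) ^ i) = (-1) ^ k * (\<Sum>i\<in>D12p g p. \<zeta> ^ (k * (i mod p)))"
    by (simp add: D12p_term sum_distrib_left cong: sum.cong)
  also have "(\<Sum>i\<in>D12p g p. \<zeta> ^ (k * (i mod p))) = (\<Sum>x\<in>cyclotomic_class 1. \<zeta> ^ (k * x))"
    by (rule sum.reindex_bij_betw[OF bij_betw_mod_D12p])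
  finally have D12p_sum:
    "(\<Sum>i\<in>D12p g p. (\<beta> ^ k) ^ i) = (-1) ^ k * (\<Sum>x\<in>cyclotomic_class 1. \<zeta> ^ (k * x))" .
  have "(\<beta> ^ k) ^ (2 * a) = \<zeta> ^ (2 * k * a)" for a
    unfolding power_mult[symmetric] beta_power[of "k * (2 * a)"] by (simp add: ac_simps)
  then show ?thesis
    using D12p_sum by (simp add: poly_gen_poly)
qed

lemma poly_gen_poly_beta_power_class:
  assumes k: "k mod p = g ^ j mod p"
  shows "poly (gen_poly g p) (\<beta> ^ k)
    = 1 + (-1) ^ k * (if odd j then residue_period else nonresidue_period)
        + (if odd (discrete_log 2 + j) then residue_period else nonresidue_period)"
proof -
  have "2 * k mod p = g ^ (discrete_log 2 + j) mod p"
    using mult_power_mod[OF discrete_log_two, of j] k by (metis mod_mult_right_eq)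
  then show ?thesis
    using poly_gen_poly_beta_power[of k] sum_cyclotomic_class_zeta_power[OF k]
      sum_cyclotomic_class_zeta_power[of "2 * k"] by (simp add: add.assoc)
qed

lemma poly_gen_poly_beta_power_multiple:
  assumes "p dvd k"
  shows "poly (gen_poly g p) (\<beta> ^ k) = 1 + ((-1) ^ k + 1) * of_nat half"
proof -
  have "(\<Sum>x\<in>cyclotomic_class 1. \<zeta> ^ (c * x)) = of_nat half" if "p dvd c" for c
  proof -
    have "\<zeta> ^ (c * x) = 1" for x
      using that zeta_power_p by (auto simp: power_mult elim!: dvdE)
    then show ?thesis
      using card_cyclotomic_class[of 1] by simp
  qed
  from this[of k] this[of "2 * k"] show ?thesis
    using assms poly_gen_poly_beta_power[of k] by (simp add: algebra_simps)
qed

lemma poly_gen_poly_beta_power_0: "poly (gen_poly g p) (\<beta> ^ 0) = of_nat p"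
proof -
  have "(of_nat p :: 'a) = 1 + 2 * of_nat half"
    by (subst p_eq_half) simp
  then show ?thesis
    using poly_gen_poly_beta_power_multiple[of 0] by simp
qed

lemma poly_gen_poly_beta_power_p: "poly (gen_poly g p) (\<beta> ^ p) = 1"
  using poly_gen_poly_beta_power_multiple[of p] odd_p by simp

lemma poly_gen_poly_beta_power_D02p:
  assumes "k \<in> D02p g p"
  shows "poly (gen_poly g p) (\<beta> ^ k)
    = 1 - nonresidue_period + (if even (discrete_log 2) then nonresidue_period else residue_period)"
proof -
  obtain m where k: "k = g ^ (2 * m) mod (2 * p)"
    using assms unfolding D02p_def by blast
  then have "odd k" and "k mod p = g ^ (2 * m) mod p"
    by (simp_all add: odd_power_mod_double mod_double_mod)
  then show ?thesis
    by (simp add: poly_gen_poly_beta_power_class)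
qed

lemma poly_gen_poly_beta_power_D12p:
  assumes "k \<in> D12p g p"
  shows "poly (gen_poly g p) (\<beta> ^ k)
    = 1 - residue_period + (if even (discrete_log 2) then residue_period else nonresidue_period)"
proof -
  obtain m where k: "k = g ^ (2 * m + 1) mod (2 * p)"
    using assms unfolding D12p_def by blast
  have "odd k" and "k mod p = g ^ (2 * m + 1) mod p"
    unfolding k by (fact odd_power_mod_double, fact mod_double_mod)
  then show ?thesis
    using poly_gen_poly_beta_power_class[of k "2 * m + 1"] by simp
qed

lemma poly_gen_poly_beta_power_twoD:
  assumes "k \<in> twoD p (cyclotomic_class e)"
  shows "poly (gen_poly g p) (\<beta> ^ k)
    = 1 + (if even (discrete_log 2 + e) then nonresidue_period else residue_period)
        + (if even e then nonresidue_period else residue_period)"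
proof -
  obtain j where "k = 2 * (g ^ j mod p) mod (2 * p)" and "even j \<longleftrightarrow> even e"
    using assms unfolding twoD_def cyclotomic_class_def by blast
  then have "k = 2 * (g ^ j mod p)" and "even j \<longleftrightarrow> even e"
    using p_gt_2 by simp_all
  moreover have "2 * (g ^ j mod p) mod p = g ^ (discrete_log 2 + j) mod p"
    by (rule mult_power_mod[OF discrete_log_two])
  ultimately show ?thesis
    by (simp add: poly_gen_poly_beta_power_class)
qed

lemma sum_beta_power_double:
  "(\<Sum>x\<in>cyclotomic_class e. \<beta> ^ (2 * x))
    = (if even (discrete_log 2 + e) then residue_period else nonresidue_period)"
  using sum_cyclotomic_class_zeta_power[OF discrete_log_two, of e]
  by (simp add: beta_power power_mult[symmetric])

end

theorem lemma8:
  fixes p g r :: nat and \<beta> :: "'a::{field,finite}"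
  assumes "prime p" "odd p"
    and "odd g" "residue_primroot p g" "residue_primroot (2*p) g"
    and "prime r" "r \<ge> 5" "r \<noteq> p"
    and "CARD('a) = r ^ ord p r"
    and "\<beta> ^ (2*p) = 1" "\<forall>j. 0 < j \<and> j < 2*p \<longrightarrow> \<beta> ^ j \<noteq> 1"
  defines "\<eta>0 \<equiv> (\<Sum>i\<in>D0p g p. \<beta> ^ (2*i))"
    and "\<eta>1 \<equiv> (\<Sum>i\<in>D1p g p. \<beta> ^ (2*i))"
    and "S \<equiv> (gen_poly g p :: 'a poly)"
  shows
   "((p mod 8 = 1 \<or> p mod 8 = 7) \<longrightarrow>
      poly S (\<beta> ^ 0) = of_nat p
      \<and> (\<forall>k \<in> D02p g p \<union> D12p g p \<union> {p}. poly S (\<beta> ^ k) = 1)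
      \<and> (\<forall>k \<in> twoD p (D0p g p). poly S (\<beta> ^ k) = 1 + 2 * \<eta>1)
      \<and> (\<forall>k \<in> twoD p (D1p g p). poly S (\<beta> ^ k) = 1 + 2 * \<eta>0))
    \<and> ((p mod 8 = 3 \<or> p mod 8 = 5) \<longrightarrow>
      poly S (\<beta> ^ 0) = of_nat p
      \<and> poly S (\<beta> ^ p) = 1
      \<and> (\<forall>k \<in> D02p g p. poly S (\<beta> ^ k) = - 2 * \<eta>0)
      \<and> (\<forall>k \<in> D12p g p. poly S (\<beta> ^ k) = - 2 * \<eta>1)
      \<and> (\<forall>k \<in> twoD p (D0p g p) \<union> twoD p (D1p g p). poly S (\<beta> ^ k) = 0))"
proof -
  interpret sequence_at_root_of_unity p g \<beta>
    using assms(1-4,10,11) by unfold_locales auto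
  have periods: "\<eta>0 = (if even (discrete_log 2) then residue_period else nonresidue_period)"
    "\<eta>1 = (if even (discrete_log 2) then nonresidue_period else residue_period)"
    using sum_beta_power_double[of 0] sum_beta_power_double[of 1]
    unfolding \<eta>0_def \<eta>1_def D0p_eq_class D1p_eq_class by simp_all
  have "residue_period = - 1 - nonresidue_period"
    using residue_period_plus_nonresidue_period by (simp add: eq_diff_eq)
  then show ?thesis
    using even_discrete_log_two_iff periods poly_gen_poly_beta_power_0 poly_gen_poly_beta_power_p
      poly_gen_poly_beta_power_D02p poly_gen_poly_beta_power_D12p
      poly_gen_poly_beta_power_twoD[of _ 0] poly_gen_poly_beta_power_twoD[of _ 1]
    unfolding S_def D0p_eq_class D1p_eq_class by auto
qed

end
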